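(* For any composition $\alpha$ of a positive integer $n$, \[\sum_{j=0}^{\lfloor n/2\rfloor}(-1)^{\ell_+^{2j}(\alpha)+r_-^{2j}(\alpha)}\,C\bigl(\ell_+^{2j}(\alpha),\,j-\ell_+^{2j}(\alpha)\bigr)\,C\bigl(r_-^{2j}(\alpha),\,\lfloor n/2\rfloor-j-r_-^{2j}(\alpha)\bigr)=\begin{cases}4^{\lfloor n/2\rfloor}&\text{if }\alpha=(n),\\0&\text{otherwise,}\end{cases}\] and \[\sum_{i=0}^n\frac{(-1)^{\ell_-^i(\alpha)+r_-^i(\alpha)+i}}{4^{\lfloor i/2\rfloor+\lfloor (n-i)/2\rfloor}}\,C\bigl(\ell_-^i(\alpha),\,\lfloor i/2\rfloor-\ell_-^i(\alpha)\bigr)\,C\bigl(r_-^i(\alpha),\,\lfloor (n-i)/2\rfloor-r_-^i(\alpha)\bigr)=0.\]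
   Context: A composition $\alpha=(a_1,\ldots,a_k)$ of $n$ is a sequence of positive integers with sum $n$; it corresponds bijectively to its descent set $D(\alpha)=\{a_1,a_1+a_2,\ldots,a_1+\cdots+a_{k-1}\}\subseteq\{1,\ldots,n-1\}$. For $0\le i\le n$, let $L_i(\alpha)$ be the composition of $i$ with descent set $D(\alpha)\cap\{1,\ldots,i-1\}$ and $R_i(\alpha)$ the composition of $n-i$ with descent set $\{d-i: d\in D(\alpha),\ d>i\}$ (so $L_0(\alpha)=R_n(\alpha)=()$, the empty composition); these are the two pieces obtained by cutting the ribbon diagram of $\alpha$ after its first $i$ cells. Statistics: $p_-(\beta)=\#\{i\ne k: b_i>1\}$ for $\beta=(b_1,\ldots,b_k)$; $p_+(\beta)=1+\#\{i\ne1,k: b_i>1\}$ if $k>1$ and $p_+(\beta)=0$ if $k\le1$. Set $\ell_\pm^i(\alpha)=p_\pm(L_i(\alpha))$ and $r_\pm^i(\alpha)=p_\pm(R_i(\alpha))$. $C(p,q)=\frac{(2p)!(2q)!}{p!(p+q)!q!}$. *)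

theory Defs
  imports Complex_Main
begin

definition is_comp :: "nat \<Rightarrow> nat list \<Rightarrow> bool" where
  "is_comp n \<alpha> \<longleftrightarrow> (\<forall>a\<in>set \<alpha>. 0 < a) \<and> sum_list \<alpha> = n"

definition descents :: "nat list \<Rightarrow> nat set" where
  "descents \<alpha> = {sum_list (take j \<alpha>) | j. 1 \<le> j \<and> j < length \<alpha>}"

definition comp_of_set :: "nat \<Rightarrow> nat set \<Rightarrow> nat list" where
  "comp_of_set n S =
     (if n = 0 then []
      else (let pts = 0 # sorted_list_of_set S @ [n]
            in map (\<lambda>(a, b). b - a) (zip pts (tl pts))))"

definition Lcomp :: "nat list \<Rightarrow> nat \<Rightarrow> nat list" where
  "Lcomp \<alpha> i = comp_of_set i (descents \<alpha> \<inter> {1..<i})"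

definition Rcomp :: "nat list \<Rightarrow> nat \<Rightarrow> nat list" where
  "Rcomp \<alpha> i = comp_of_set (sum_list \<alpha> - i) {d - i | d. d \<in> descents \<alpha> \<and> i < d}"

definition p_minus :: "nat list \<Rightarrow> nat" where
  "p_minus \<beta> = card {i. i < length \<beta> - 1 \<and> 1 < \<beta> ! i}"

definition p_plus :: "nat list \<Rightarrow> nat" where
  "p_plus \<beta> = (if 1 < length \<beta>
                 then 1 + card {i. 0 < i \<and> i < length \<beta> - 1 \<and> 1 < \<beta> ! i}
                 else 0)"

definition lp :: "nat list \<Rightarrow> nat \<Rightarrow> nat" where "lp \<alpha> i = p_plus (Lcomp \<alpha> i)"
definition lm :: "nat list \<Rightarrow> nat \<Rightarrow> nat" where "lm \<alpha> i = p_minus (Lcomp \<alpha> i)"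
definition rp :: "nat list \<Rightarrow> nat \<Rightarrow> nat" where "rp \<alpha> i = p_plus (Rcomp \<alpha> i)"
definition rm :: "nat list \<Rightarrow> nat \<Rightarrow> nat" where "rm \<alpha> i = p_minus (Rcomp \<alpha> i)"

definition Cnum :: "nat \<Rightarrow> nat \<Rightarrow> real" where
  "Cnum p q = fact (2*p) * fact (2*q) / (fact p * fact (p+q) * fact q)"

end

theory Submission
  imports Defs "HOL-Computational_Algebra.Formal_Power_Series"
begin

(* Let D be the descent set of the composition and R the set of run starts of D, the descents d
   with d - 1 not in D.  The statistics l_+^i, l_-^i and r_-^i count the elements of R (those
   that are at least 2 for p_-) below i, respectively from i + 2 on.  Writing
   Chat p h = (-1)^p C(p, h - p) / 4^h, each of the sums in question becomes a sum over j of
   Chat (#X below 2j + c) j * Chat (#X from 2j + c + 2 on) (h - j) for a set X without two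
   consecutive elements.  Halving X gives a set B, a proper subset of {0..h}, and the sum becomes
   the sum over j of Chat (#B below j) j * Chat (#B above j) (h - j), which equals 1 for B empty
   and 0 otherwise: for B empty it is the convolution square of the coefficients of (1 - x)^(-1/2),
   and removing an element of B turns the sum into the difference of two sums of the same shape,
   by Chat (p + 1) h = Chat p h - Chat p (h - 1).  In the second identity the even and the odd i
   contribute this value with opposite signs. *)

section \<open>The numbers Chat\<close>

(* For p <= h, Chat p h is the coefficient of x^h in (1 - x)^(p - 1/2). *)
definition Chat :: "nat \<Rightarrow> nat \<Rightarrow> real" where
  "Chat p h = (-1) ^ p * Cnum p (h - p) / 4 ^ h"

lemma Cnum_commute: "Cnum p q = Cnum q p"
  unfolding Cnum_def by (simp add: ac_simps)

lemma Cnum_Suc_left: "Cnum (Suc p) q = 2 * (2 * p + 1) / (p + q + 1) * Cnum p q"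
proof -
  have "fact (2 * Suc p) = (2 * p + 2) * (2 * p + 1) * (fact (2 * p) :: real)"
       "fact (Suc p + q) = (p + q + 1) * (fact (p + q) :: real)"
       "fact (Suc p) = (p + 1) * (fact p :: real)"
    by (simp_all add: fact_Suc algebra_simps)
  then show ?thesis
    unfolding Cnum_def by (simp add: divide_simps) (simp add: algebra_simps)
qed

lemma Cnum_recurrence: "4 * Cnum p q = Cnum (Suc p) q + Cnum p (Suc q)"
proof -
  have "Cnum p (Suc q) = 2 * (2 * q + 1) / (p + q + 1) * Cnum p q"
    using Cnum_Suc_left[of q p] by (simp add: Cnum_commute add.commute)
  moreover have "real p + real q + 1 \<noteq> 0"
    by linarith
  ultimately show ?thesis
    by (simp add: Cnum_Suc_left divide_simps) (simp add: algebra_simps)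
qed

lemma Chat_Suc:
  assumes "Suc p \<le> m"
  shows "Chat (Suc p) m = Chat p m - Chat p (m - 1)"
proof -
  obtain q where m: "m = Suc (p + q)"
    using assms by (metis add_Suc le_iff_add)
  have "Chat p m - Chat p (m - 1) = (-1) ^ p * (Cnum p (Suc q) - 4 * Cnum p q) / 4 ^ m"
    by (simp add: Chat_def m Suc_diff_le field_simps)
  then show ?thesis
    by (simp add: Chat_def m Cnum_recurrence)
qed

lemma gchoose_minus_half:
  "((-1/2 :: real) gchoose k) = (-1/4) ^ k * (fact (2 * k) / (fact k * fact k))"
proof (induction k)
  case 0
  then show ?case by simp
next
  case (Suc k)
  have "((-1/2 :: real) gchoose Suc k) = ((-1/2) gchoose k) * (-1/2 - real k) / (real k + 1)"
    using gbinomial_mult_1[of "-1/2 :: real" k] by (simp add: field_simps)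
  also have "\<dots> = (-1/4) ^ Suc k * (fact (2 * Suc k) / (fact (Suc k) * fact (Suc k)))"
    unfolding Suc.IH by (simp add: fact_Suc divide_simps) (simp add: algebra_simps)
  finally show ?case .
qed

lemma Chat_zero_convolution: "(\<Sum>j=0..h. Chat 0 j * Chat 0 (h - j)) = 1"
proof -
  have Chat_0: "Chat 0 j = (-1) ^ j * ((-1/2 :: real) gchoose j)" for j
    unfolding Chat_def Cnum_def gchoose_minus_half
    by (simp add: power_divide field_simps flip: power_mult_distrib)
  have "(\<Sum>j=0..h. Chat 0 j * Chat 0 (h - j))
      = (-1) ^ h * (\<Sum>j=0..h. ((-1/2 :: real) gchoose j) * ((-1/2) gchoose (h - j)))"
    unfolding Chat_0 sum_distrib_left
    by (intro sum.cong) (auto simp: algebra_simps simp flip: power_add)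
  also have "\<dots> = (-1) ^ h * ((-1 :: real) gchoose h)"
    by (simp add: gbinomial_Vandermonde)
  also have "\<dots> = 1"
    by (simp add: gbinomial_minus[of "1 :: real"] flip: power_add binomial_gbinomial)
  finally show ?thesis .
qed

lemma Cnum_product_eq_Chat:
  assumes "j \<le> h"
  shows "(-1) ^ (a + b) * Cnum a (j - a) * Cnum b (h - j - b) = 4 ^ h * (Chat a j * Chat b (h - j))"
proof -
  have "(4::real) ^ h = 4 ^ j * 4 ^ (h - j)"
    using assms by (simp flip: power_add)
  then show ?thesis
    unfolding Chat_def by (simp add: power_add field_simps)
qed

section \<open>Cut sums\<close>

lemma card_filter_remove:
  assumes "finite B" "x \<in> B"
  shows "card {y\<in>B. P y} = card {y\<in>B - {x}. P y} + (if P x then 1 else 0)"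
proof -
  have "{y\<in>B. P y} = (if P x then insert x else id) {y\<in>B - {x}. P y}"
    using assms(2) by auto
  then show ?thesis
    using assms(1) by simp
qed

lemma card_filter_image:
  assumes "inj_on g A"
  shows "card {z\<in>g ` A. P z} = card {y\<in>A. P (g y)}"
proof -
  have "{z\<in>g ` A. P z} = g ` {y\<in>A. P (g y)}"
    by auto
  then show ?thesis
    using assms by (simp add: card_image inj_on_subset)
qed

lemma card_below_le: "card {y\<in>B. y < (j::nat)} \<le> j"
proof -
  have "card {y\<in>B. y < j} \<le> card {..<j}"
    by (intro card_mono) auto
  then show ?thesis
    by simp
qed

lemma card_above_le:
  assumes "B \<subseteq> {0..h}"
  shows "card {y\<in>B. (j::nat) < y} \<le> h - j"
proof -
  have "card {y\<in>B. j < y} \<le> card {j<..h}"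
    using assms by (intro card_mono) auto
  then show ?thesis
    by simp
qed

definition cut_term :: "nat set \<Rightarrow> nat \<Rightarrow> nat \<Rightarrow> real" where
  "cut_term B h j = Chat (card {y\<in>B. y < j}) j * Chat (card {y\<in>B. j < y}) (h - j)"

definition cut_sum :: "nat set \<Rightarrow> nat \<Rightarrow> real" where
  "cut_sum B h = (\<Sum>j=0..h. cut_term B h j)"

definition squeeze :: "nat \<Rightarrow> nat \<Rightarrow> nat" where
  "squeeze x y = (if y < x then y else y - 1)"

lemma cut_term_remove:
  assumes B: "B \<subseteq> {0..h}" and x: "x \<in> B" and j: "j \<le> h"
  defines "B' \<equiv> B - {x}" and "B'' \<equiv> squeeze x ` (B - {x})"
  shows "cut_term B h j = cut_term B' h j -
           (if j < x then cut_term B'' (h - 1) j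
            else if j = x then 0 else cut_term B'' (h - 1) (j - 1))"
proof -
  have fin: "finite B"
    using B finite_subset by blast
  have inj: "inj_on (squeeze x) B'"
    unfolding B'_def squeeze_def inj_on_def by auto
  define a where "a = card {y\<in>B'. y < j}"
  define b where "b = card {y\<in>B'. j < y}"
  have below: "card {y\<in>B. y < j} = a + (if x < j then 1 else 0)"
    unfolding a_def B'_def by (rule card_filter_remove[OF fin x])
  have above: "card {y\<in>B. j < y} = b + (if j < x then 1 else 0)"
    unfolding b_def B'_def by (rule card_filter_remove[OF fin x])
  consider "j < x" | "j = x" | "x < j"
    by linarith
  then show ?thesis
  proof cases
    case 1
    have "card {z\<in>B''. z < j} = a" "card {z\<in>B''. j < z} = b"
      unfolding B''_def B'_def[symmetric] card_filter_image[OF inj] a_def b_def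
      using 1 by (auto simp: squeeze_def B'_def intro!: arg_cong[where f = card])
    moreover have "Chat (Suc b) (h - j) = Chat b (h - j) - Chat b (h - j - 1)"
      using card_above_le[OF B, of j] above 1 by (intro Chat_Suc) simp
    ultimately show ?thesis
      using 1 below above by (simp add: cut_term_def right_diff_distrib left_diff_distrib flip: a_def b_def)
  next
    case 2
    then show ?thesis
      using below above by (simp add: cut_term_def a_def b_def)
  next
    case 3
    have "card {z\<in>B''. z < j - 1} = a" "card {z\<in>B''. j - 1 < z} = b"
      unfolding B''_def B'_def[symmetric] card_filter_image[OF inj] a_def b_def
      using 3 by (auto simp: squeeze_def B'_def intro!: arg_cong[where f = card])
    moreover have "Chat (Suc a) j = Chat a j - Chat a (j - 1)"
      using card_below_le[of B j] below 3 by (intro Chat_Suc) simp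
    moreover have "h - 1 - (j - 1) = h - j"
      using 3 j by simp
    ultimately show ?thesis
      using 3 below above by (simp add: cut_term_def right_diff_distrib left_diff_distrib flip: a_def b_def)
  qed
qed

lemma cut_sum_remove:
  assumes B: "B \<subseteq> {0..h}" and x: "x \<in> B" and h: "0 < h"
  shows "cut_sum B h = cut_sum (B - {x}) h - cut_sum (squeeze x ` (B - {x})) (h - 1)"
proof -
  define B'' where "B'' = squeeze x ` (B - {x})"
  define E where "E j = (if j < x then cut_term B'' (h - 1) j
                         else if j = x then 0 else cut_term B'' (h - 1) (j - 1))" for j
  have "x \<le> h"
    using B x by auto
  then have "(\<Sum>j=0..h. E j) = (\<Sum>j\<in>{0..h} - {x}. E j)"
    by (simp add: sum.remove E_def)
  also have "\<dots> = cut_sum B'' (h - 1)"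
    unfolding cut_sum_def
    by (rule sum.reindex_bij_witness[where j = "\<lambda>j. if j < x then j else j - 1"
                                       and i = "\<lambda>k. if k < x then k else Suc k"])
       (use h \<open>x \<le> h\<close> in \<open>auto simp: E_def\<close>)
  finally have E: "(\<Sum>j=0..h. E j) = cut_sum B'' (h - 1)" .
  have "cut_sum B h = (\<Sum>j=0..h. cut_term (B - {x}) h j - E j)"
    unfolding cut_sum_def E_def B''_def
    by (intro sum.cong refl cut_term_remove[OF B x]) simp
  then show ?thesis
    by (simp add: sum_subtractf E flip: cut_sum_def B''_def)
qed

lemma cut_sum_eq:
  assumes "B \<subseteq> {0..h}" and "card B \<le> h"
  shows "cut_sum B h = (if B = {} then 1 else 0)"
  using assms
proof (induction "card B" arbitrary: B h rule: less_induct)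
  case less
  show ?case
  proof (cases "B = {}")
    case True
    then show ?thesis
      using Chat_zero_convolution[of h] by (simp add: cut_sum_def cut_term_def)
  next
    case False
    then obtain x where x: "x \<in> B"
      by auto
    have fin: "finite B"
      using less.prems(1) finite_subset by blast
    then have h: "0 < h"
      using less.prems(2) x card_gt_0_iff by fastforce
    define B' where "B' = B - {x}"
    define B'' where "B'' = squeeze x ` B'"
    have card_B': "card B' = card B - 1" "card B' < card B"
      using fin x card_Diff1_less[OF fin x] by (simp_all add: B'_def)
    have card_B'': "card B'' = card B'"
      unfolding B''_def B'_def squeeze_def by (intro card_image) (auto simp: inj_on_def)
    have "cut_sum B' h = (if B' = {} then 1 else 0)"
      by (rule less.hyps) (use less.prems card_B' in \<open>auto simp: B'_def\<close>)
    moreover have "cut_sum B'' (h - 1) = (if B'' = {} then 1 else 0)"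
      by (rule less.hyps)
         (use less.prems card_B' card_B'' x in \<open>auto simp: B''_def B'_def squeeze_def\<close>)
    ultimately show ?thesis
      using cut_sum_remove[OF less.prems(1) x h] False by (simp add: B''_def B'_def)
  qed
qed

lemma inj_on_half_sparse:
  assumes "\<forall>d\<in>X. Suc d \<notin> X" and "\<forall>d\<in>X. k \<le> d"
  shows "inj_on (\<lambda>d. (d - k) div 2) X"
proof (rule inj_onI, rule ccontr)
  fix d d' assume "d \<in> X" "d' \<in> X" "(d - k) div 2 = (d' - k) div 2" "d \<noteq> d'"
  moreover have "k \<le> d" "k \<le> d'"
    using assms(2) \<open>d \<in> X\<close> \<open>d' \<in> X\<close> by auto
  moreover have "d - k = 2 * ((d - k) div 2) + (d - k) mod 2" "(d - k) mod 2 < 2"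
                "d' - k = 2 * ((d' - k) div 2) + (d' - k) mod 2" "(d' - k) mod 2 < 2"
    by simp_all
  ultimately have "Suc d = d' \<or> Suc d' = d"
    by linarith
  then show False
    using assms(1) \<open>d \<in> X\<close> \<open>d' \<in> X\<close> by auto
qed

lemma sparse_block_sum:
  assumes sparse: "\<forall>d\<in>X. Suc d \<notin> X" and bounds: "\<forall>d\<in>X. c < d \<and> d \<le> 2 * h + c"
  shows "(\<Sum>j=0..h. Chat (card {d\<in>X. d < 2 * j + c}) j
                      * Chat (card {d\<in>X. 2 * j + c + 2 \<le> d}) (h - j))
           = (if X = {} then 1 else 0)"
proof -
  define g where "g d = (d - c) div 2" for d
  have inj: "inj_on g X"
    unfolding g_def using sparse bounds by (intro inj_on_half_sparse) auto
  \<comment> \<open>X meets each of the h pairs {c + 2k + 1, c + 2k + 2} at most once.\<close>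
  have "card X = card ((\<lambda>d. (d - Suc c) div 2) ` X)"
    using sparse bounds by (intro card_image[symmetric] inj_on_half_sparse) auto
  also have "\<dots> \<le> card {..<h}"
  proof (intro card_mono image_subsetI)
    fix d assume "d \<in> X"
    then have "d - Suc c < h * 2"
      using bounds by auto
    then show "(d - Suc c) div 2 \<in> {..<h}"
      by (simp add: less_mult_imp_div_less)
  qed simp
  finally have "card (g ` X) \<le> h"
    using inj by (simp add: card_image)
  moreover have "g ` X \<subseteq> {0..h}"
    using bounds by (auto simp: g_def)
  ultimately have "cut_sum (g ` X) h = (if X = {} then 1 else 0)"
    by (simp add: cut_sum_eq)
  moreover have "card {z\<in>g ` X. z < j} = card {d\<in>X. d < 2 * j + c}"
                "card {z\<in>g ` X. j < z} = card {d\<in>X. 2 * j + c + 2 \<le> d}" for j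
  proof -
    have "g d < j \<longleftrightarrow> d < 2 * j + c" "j < g d \<longleftrightarrow> 2 * j + c + 2 \<le> d"
      if "d \<in> X" for d
      using bounds that unfolding g_def by auto
    then show "card {z\<in>g ` X. z < j} = card {d\<in>X. d < 2 * j + c}"
              "card {z\<in>g ` X. j < z} = card {d\<in>X. 2 * j + c + 2 \<le> d}"
      unfolding card_filter_image[OF inj] by (auto intro!: arg_cong[where f = card])
  qed
  ultimately show ?thesis
    by (simp add: cut_sum_def cut_term_def)
qed

section \<open>Run starts of descent sets\<close>

lemma sorted_wrt_less_pred_mem:
  fixes ys :: "nat list"
  assumes sorted: "sorted_wrt (<) ys" and u: "Suc u < length ys"
  shows "ys ! Suc u - 1 \<in> set ys \<longleftrightarrow> ys ! Suc u - 1 = ys ! u"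
proof
  have mono: "ys ! v \<le> ys ! w" if "v \<le> w" "w < length ys" for v w
    using sorted_nth_mono[OF strict_sorted_imp_sorted[OF sorted] that] .
  have less: "ys ! u < ys ! Suc u"
    using sorted u by (simp add: sorted_wrt_iff_nth_less)
  assume "ys ! Suc u - 1 \<in> set ys"
  then obtain v where v: "v < length ys" "ys ! v = ys ! Suc u - 1"
    by (auto simp: in_set_conv_nth)
  have "v \<le> u"
    using mono[of "Suc u" v] v less by (cases "v \<le> u") auto
  then show "ys ! Suc u - 1 = ys ! u"
    using mono[of v u] v less u by simp
qed (use u in auto)

lemma card_filter_nth:
  assumes "distinct xs"
  shows "card {u. u < length xs \<and> P (xs ! u)} = card {x\<in>set xs. P x}"
proof -
  have "{x\<in>set xs. P x} = (!) xs ` {u. u < length xs \<and> P (xs ! u)}"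
    by (auto simp: in_set_conv_nth)
  moreover have "inj_on ((!) xs) {u. u < length xs \<and> P (xs ! u)}"
    using assms by (auto simp: inj_on_def nth_eq_iff_index_eq)
  ultimately show ?thesis
    by (simp add: card_image)
qed

definition run_starts :: "nat set \<Rightarrow> nat set" where
  "run_starts S = {d\<in>S. d - 1 \<notin> S}"

lemma run_starts_sparse: "d \<in> run_starts S \<Longrightarrow> Suc d \<notin> run_starts S"
  by (simp add: run_starts_def)

lemma run_starts_empty_iff:
  assumes "finite S" and "0 \<notin> S"
  shows "run_starts S = {} \<longleftrightarrow> S = {}"
proof
  assume "run_starts S = {}"
  show "S = {}"
  proof (rule ccontr)
    assume "S \<noteq> {}"
    then have "Min S \<in> S"
      using assms(1) by simp
    moreover have "Min S - 1 \<notin> S"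
    proof
      assume "Min S - 1 \<in> S"
      then have "Min S \<le> Min S - 1"
        using assms(1) by simp
      moreover have "0 < Min S"
        using \<open>Min S \<in> S\<close> assms(2) by (cases "Min S") auto
      ultimately show False
        by linarith
    qed
    ultimately show False
      using \<open>run_starts S = {}\<close> by (auto simp: run_starts_def)
  qed
qed (simp add: run_starts_def)

lemma run_starts_Int_atLeastLessThan:
  assumes "0 \<notin> S"
  shows "run_starts (S \<inter> {1..<i}) = {d\<in>run_starts S. d < i}"
  using assms by (auto simp: run_starts_def Suc_le_eq intro: gr0I)

lemma card_run_starts_shift:
  fixes S :: "nat set" and i :: nat
  defines "S' \<equiv> {d - i | d. d \<in> S \<and> i < d}"
  shows "card {e\<in>run_starts S'. 2 \<le> e} = card {d\<in>run_starts S. i + 2 \<le> d}"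
proof -
  have mem: "e \<in> S' \<longleftrightarrow> 0 < e \<and> e + i \<in> S" for e
    unfolding S'_def by force
  have "{d\<in>run_starts S. i + 2 \<le> d} = (\<lambda>e. e + i) ` {e\<in>run_starts S'. 2 \<le> e}"
  proof (rule set_eqI)
    fix d
    show "d \<in> {d\<in>run_starts S. i + 2 \<le> d} \<longleftrightarrow> d \<in> (\<lambda>e. e + i) ` {e\<in>run_starts S'. 2 \<le> e}"
      unfolding run_starts_def mem image_iff
      by auto (rule exI[of _ "d - i"], auto)
  qed
  then show ?thesis
    by (simp add: card_image)
qed

lemma length_comp_of_set: "0 < m \<Longrightarrow> length (comp_of_set m S) = Suc (card S)"
  by (simp add: comp_of_set_def Let_def)

lemma comp_of_set_nth_gt_1:
  assumes S: "S \<subseteq> {1..<m}" and u: "u < card S"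
  shows "1 < comp_of_set m S ! u \<longleftrightarrow> sorted_list_of_set S ! u - 1 \<notin> insert 0 S"
proof -
  have fin: "finite S"
    using S finite_subset by blast
  define ys where "ys = 0 # sorted_list_of_set S"
  have sorted: "sorted_wrt (<) ys" and set_ys: "set ys = insert 0 S" and len: "length ys = Suc (card S)"
    using S fin by (auto simp: ys_def)
  have "0 < m"
    using S u by (cases "m = 0") auto
  then have "comp_of_set m S ! u = ys ! Suc u - ys ! u"
    using u by (simp add: comp_of_set_def ys_def Let_def nth_append nth_Cons')
  moreover have "ys ! u < ys ! Suc u"
    using sorted u len by (simp add: sorted_wrt_iff_nth_less)
  moreover have "ys ! Suc u - 1 \<in> set ys \<longleftrightarrow> ys ! Suc u - 1 = ys ! u"
    using sorted_wrt_less_pred_mem[OF sorted] u len by simp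
  moreover have "sorted_list_of_set S ! u = ys ! Suc u"
    by (simp add: ys_def)
  ultimately show ?thesis
    unfolding set_ys[symmetric] by auto
qed

lemma p_minus_comp_of_set:
  assumes S: "S \<subseteq> {1..<m}"
  shows "p_minus (comp_of_set m S) = card {d\<in>run_starts S. 2 \<le> d}"
proof (cases "m = 0")
  case True
  then show ?thesis
    using S by (simp add: comp_of_set_def p_minus_def run_starts_def)
next
  case False
  then have "0 < m"
    by simp
  define xs where "xs = sorted_list_of_set S"
  have fin: "finite S"
    using S finite_subset by blast
  have "p_minus (comp_of_set m S) = card {u. u < length xs \<and> xs ! u - 1 \<notin> insert 0 S}"
    unfolding p_minus_def length_comp_of_set[OF \<open>0 < m\<close>]
    using comp_of_set_nth_gt_1[OF S] by (auto simp: xs_def intro!: arg_cong[where f = card])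
  also have "\<dots> = card {d\<in>S. d - 1 \<notin> insert 0 S}"
    using card_filter_nth[of xs "\<lambda>d. d - 1 \<notin> insert 0 S"] fin by (simp add: xs_def)
  also have "{d\<in>S. d - 1 \<notin> insert 0 S} = {d\<in>run_starts S. 2 \<le> d}"
    using S by (auto simp: run_starts_def)
  finally show ?thesis .
qed

lemma p_plus_comp_of_set:
  assumes S: "S \<subseteq> {1..<m}"
  shows "p_plus (comp_of_set m S) = card (run_starts S)"
proof (cases "S = {}")
  case True
  then show ?thesis
    by (simp add: comp_of_set_def p_plus_def run_starts_def Let_def)
next
  case False
  define xs where "xs = sorted_list_of_set S"
  define k where "k = card S"
  have fin: "finite S"
    using S finite_subset by blast
  have set_xs: "set xs = S" and len: "length xs = k" and sorted: "sorted_wrt (<) xs"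
    using fin by (simp_all add: xs_def k_def)
  have "0 < k" "0 < m"
    using False fin S by (auto simp: k_def)
  have first: "xs ! 0 - 1 \<notin> S"
  proof
    assume "xs ! 0 - 1 \<in> S"
    then obtain v where "v < k" "xs ! v = xs ! 0 - 1"
      using set_xs len by (auto simp: in_set_conv_nth)
    moreover have "xs ! 0 \<le> xs ! v" "1 \<le> xs ! 0"
      using sorted_nth_mono[OF strict_sorted_imp_sorted[OF sorted], of 0 v] \<open>v < k\<close> len
            nth_mem[of 0 xs] \<open>0 < k\<close> set_xs S by auto
    ultimately show False
      by linarith
  qed
  have later: "xs ! u - 1 \<notin> S \<longleftrightarrow> xs ! u - 1 \<notin> insert 0 S" if "0 < u" "u < k" for u
  proof -
    have "xs ! 0 < xs ! u" "1 \<le> xs ! 0"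
      using sorted that len nth_mem[of 0 xs] set_xs S by (auto simp: sorted_wrt_iff_nth_less)
    then show ?thesis
      by auto
  qed
  have "{u. u < k \<and> xs ! u - 1 \<notin> S} = insert 0 {u. 0 < u \<and> u < k \<and> 1 < comp_of_set m S ! u}"
    using first later comp_of_set_nth_gt_1[OF S] \<open>0 < k\<close> by (auto simp: xs_def k_def)
  then have "card {d\<in>S. d - 1 \<notin> S} = Suc (card {u. 0 < u \<and> u < k \<and> 1 < comp_of_set m S ! u})"
    using card_filter_nth[of xs "\<lambda>d. d - 1 \<notin> S"] fin by (simp add: xs_def k_def)
  then show ?thesis
    using \<open>0 < k\<close> \<open>0 < m\<close> by (simp add: p_plus_def length_comp_of_set run_starts_def k_def)
qed

lemma descents_subset:
  assumes "is_comp n \<alpha>"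
  shows "descents \<alpha> \<subseteq> {1..<n}"
proof
  fix d assume "d \<in> descents \<alpha>"
  then obtain j where d: "d = sum_list (take j \<alpha>)" and j: "1 \<le> j" "j < length \<alpha>"
    unfolding descents_def by auto
  have pos: "\<forall>a\<in>set \<alpha>. 0 < a" and sum: "sum_list (take j \<alpha>) + sum_list (drop j \<alpha>) = n"
    using assms unfolding is_comp_def by (simp_all flip: sum_list_append)
  have pos_sum: "0 < sum_list xs" if "xs \<noteq> []" "set xs \<subseteq> set \<alpha>" for xs
    using member_le_sum_list[OF hd_in_set[OF that(1)]] pos hd_in_set[OF that(1)] that(2) by fastforce
  have "0 < sum_list (take j \<alpha>)"
    using pos_sum[of "take j \<alpha>"] j set_take_subset[of j \<alpha>] by force
  moreover have "0 < sum_list (drop j \<alpha>)"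
    using pos_sum[of "drop j \<alpha>"] j set_drop_subset[of j \<alpha>] by simp
  ultimately show "d \<in> {1..<n}"
    using d sum by auto
qed

lemma descents_empty_iff:
  assumes "is_comp n \<alpha>" and "0 < n"
  shows "descents \<alpha> = {} \<longleftrightarrow> \<alpha> = [n]"
proof -
  have "descents \<alpha> = {} \<longleftrightarrow> \<not> 1 < length \<alpha>"
    unfolding descents_def by auto
  also have "\<dots> \<longleftrightarrow> \<alpha> = [n]"
    using assms by (cases \<alpha>) (auto simp: is_comp_def le_Suc_eq)
  finally show ?thesis .
qed

lemma run_starts_descents_empty_iff:
  assumes "is_comp n \<alpha>" and "0 < n"
  shows "run_starts (descents \<alpha>) = {} \<longleftrightarrow> \<alpha> = [n]"
proof -
  have "finite (descents \<alpha>)" and "0 \<notin> descents \<alpha>"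
    using descents_subset[OF assms(1)] finite_subset by auto
  then show ?thesis
    using run_starts_empty_iff descents_empty_iff[OF assms] by simp
qed

lemma lp_eq_card_run_starts:
  assumes "is_comp n \<alpha>"
  shows "lp \<alpha> i = card {d\<in>run_starts (descents \<alpha>). d < i}"
proof -
  have zero: "0 \<notin> descents \<alpha>" and sub: "descents \<alpha> \<inter> {1..<i} \<subseteq> {1..<i}"
    using descents_subset[OF assms] by auto
  show ?thesis
    unfolding lp_def Lcomp_def p_plus_comp_of_set[OF sub] run_starts_Int_atLeastLessThan[OF zero] ..
qed

lemma lm_eq_card_run_starts:
  assumes "is_comp n \<alpha>"
  shows "lm \<alpha> i = card {d\<in>run_starts (descents \<alpha>). 2 \<le> d \<and> d < i}"
proof -
  have zero: "0 \<notin> descents \<alpha>" and sub: "descents \<alpha> \<inter> {1..<i} \<subseteq> {1..<i}"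
    using descents_subset[OF assms] by auto
  have "lm \<alpha> i = card {d\<in>{d\<in>run_starts (descents \<alpha>). d < i}. 2 \<le> d}"
    unfolding lm_def Lcomp_def p_minus_comp_of_set[OF sub] run_starts_Int_atLeastLessThan[OF zero] ..
  also have "{d\<in>{d\<in>run_starts (descents \<alpha>). d < i}. 2 \<le> d}
      = {d\<in>run_starts (descents \<alpha>). 2 \<le> d \<and> d < i}"
    by auto
  finally show ?thesis .
qed

lemma rm_eq_card_run_starts:
  assumes "is_comp n \<alpha>"
  shows "rm \<alpha> i = card {d\<in>run_starts (descents \<alpha>). i + 2 \<le> d}"
proof -
  have "d < sum_list \<alpha>" if "d \<in> descents \<alpha>" for d
    using descents_subset[OF assms] assms that by (auto simp: is_comp_def)
  then have "{d - i | d. d \<in> descents \<alpha> \<and> i < d} \<subseteq> {1..<sum_list \<alpha> - i}"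
    by fastforce
  then show ?thesis
    by (simp add: rm_def Rcomp_def p_minus_comp_of_set card_run_starts_shift)
qed

section \<open>The two identities\<close>

lemma sum_atLeast0_atMost_even_odd:
  fixes f :: "nat \<Rightarrow> 'a::comm_monoid_add"
  assumes "0 < n"
  shows "(\<Sum>i=0..n. f i) = (\<Sum>m=0..n div 2. f (2 * m)) + (\<Sum>m=0..(n - 1) div 2. f (2 * m + 1))"
proof -
  have "{0..n} = (\<lambda>m. 2 * m) ` {0..n div 2} \<union> (\<lambda>m. 2 * m + 1) ` {0..(n - 1) div 2}"
  proof (intro set_eqI iffI)
    fix i assume "i \<in> {0..n}"
    then show "i \<in> (\<lambda>m. 2 * m) ` {0..n div 2} \<union> (\<lambda>m. 2 * m + 1) ` {0..(n - 1) div 2}"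
      using assms by (cases "even i") (auto simp: image_iff elim!: evenE oddE intro: exI[of _ "i div 2"])
  qed (use assms in auto)
  moreover have "(\<lambda>m. 2 * m) ` {0..n div 2} \<inter> (\<lambda>m. 2 * m + 1) ` {0..(n - 1) div 2} = {}"
    by auto presburger
  ultimately show ?thesis
    by (simp add: sum.union_disjoint sum.reindex inj_on_def)
qed

lemma lp_rm_sum_eq:
  assumes "0 < n" and comp: "is_comp n \<alpha>"
  shows "(\<Sum>j=0..n div 2. (-1::real) ^ (lp \<alpha> (2*j) + rm \<alpha> (2*j))
            * Cnum (lp \<alpha> (2*j)) (j - lp \<alpha> (2*j))
            * Cnum (rm \<alpha> (2*j)) (n div 2 - j - rm \<alpha> (2*j)))
         = (if \<alpha> = [n] then 4 ^ (n div 2) else 0)"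
proof -
  define h where "h = n div 2"
  define Q where "Q = run_starts (descents \<alpha>)"
  have Q_sub: "Q \<subseteq> {1..<n}"
    using descents_subset[OF comp] by (auto simp: Q_def run_starts_def)
  have "(\<Sum>j=0..h. (-1::real) ^ (lp \<alpha> (2*j) + rm \<alpha> (2*j))
            * Cnum (lp \<alpha> (2*j)) (j - lp \<alpha> (2*j))
            * Cnum (rm \<alpha> (2*j)) (h - j - rm \<alpha> (2*j)))
      = 4 ^ h * (\<Sum>j=0..h. Chat (card {d\<in>Q. d < 2 * j}) j * Chat (card {d\<in>Q. 2 * j + 2 \<le> d}) (h - j))"
    unfolding sum_distrib_left lp_eq_card_run_starts[OF comp] rm_eq_card_run_starts[OF comp]
      Q_def[symmetric]
    by (intro sum.cong refl Cnum_product_eq_Chat) simp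
  also have "\<dots> = 4 ^ h * (if Q = {} then 1 else 0)"
  proof -
    have "n \<le> 2 * h + 1"
      unfolding h_def by linarith
    then have "\<forall>d\<in>Q. 0 < d \<and> d \<le> 2 * h + 0"
      using Q_sub by auto
    then show ?thesis
      using sparse_block_sum[of Q 0 h] run_starts_sparse by (simp add: Q_def)
  qed
  also have "Q = {} \<longleftrightarrow> \<alpha> = [n]"
    unfolding Q_def by (rule run_starts_descents_empty_iff[OF comp \<open>0 < n\<close>])
  finally show ?thesis
    by (simp add: h_def)
qed

lemma lm_rm_term_eq_Chat:
  fixes c m :: nat
  assumes comp: "is_comp n \<alpha>" and "c \<le> 1"
  defines "i \<equiv> 2 * m + c" and "h \<equiv> (n - c) div 2"
    and "P \<equiv> {d\<in>run_starts (descents \<alpha>). 2 \<le> d}"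
  assumes "m \<le> h"
  shows "(-1::real) ^ (lm \<alpha> i + rm \<alpha> i + i) / 4 ^ (i div 2 + (n - i) div 2)
            * Cnum (lm \<alpha> i) (i div 2 - lm \<alpha> i)
            * Cnum (rm \<alpha> i) ((n - i) div 2 - rm \<alpha> i)
         = (-1) ^ c * (Chat (card {d\<in>P. d < 2 * m + c}) m * Chat (card {d\<in>P. 2 * m + c + 2 \<le> d}) (h - m))"
proof -
  define a where "a = card {d\<in>P. d < 2 * m + c}"
  define b where "b = card {d\<in>P. 2 * m + c + 2 \<le> d}"
  have "lm \<alpha> i = a" "rm \<alpha> i = b"
    unfolding lm_eq_card_run_starts[OF comp] rm_eq_card_run_starts[OF comp] a_def b_def P_def i_def
    by (auto intro!: arg_cong[where f = card])
  moreover have "i div 2 = m" "(n - i) div 2 = h - m" "m + (h - m) = h"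
    using \<open>c \<le> 1\<close> \<open>m \<le> h\<close> unfolding i_def h_def by (auto simp: le_iff_add)
  moreover have "(-1::real) ^ i = (-1) ^ c"
    by (simp add: i_def power_add)
  ultimately have "(-1::real) ^ (lm \<alpha> i + rm \<alpha> i + i) / 4 ^ (i div 2 + (n - i) div 2)
            * Cnum (lm \<alpha> i) (i div 2 - lm \<alpha> i) * Cnum (rm \<alpha> i) ((n - i) div 2 - rm \<alpha> i)
      = (-1) ^ c * ((-1) ^ (a + b) * Cnum a (m - a) * Cnum b (h - m - b) / 4 ^ h)"
    by (simp add: power_add)
  then show ?thesis
    using Cnum_product_eq_Chat[OF \<open>m \<le> h\<close>, of a b] by (simp add: a_def b_def)
qed

lemma lm_rm_sum_eq_0:
  assumes "0 < n" and comp: "is_comp n \<alpha>"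
  shows "(\<Sum>i=0..n. (-1::real) ^ (lm \<alpha> i + rm \<alpha> i + i) / 4 ^ (i div 2 + (n - i) div 2)
            * Cnum (lm \<alpha> i) (i div 2 - lm \<alpha> i)
            * Cnum (rm \<alpha> i) ((n - i) div 2 - rm \<alpha> i)) = 0"
proof -
  define f where "f i = (-1::real) ^ (lm \<alpha> i + rm \<alpha> i + i) / 4 ^ (i div 2 + (n - i) div 2)
            * Cnum (lm \<alpha> i) (i div 2 - lm \<alpha> i)
            * Cnum (rm \<alpha> i) ((n - i) div 2 - rm \<alpha> i)" for i
  define P where "P = {d\<in>run_starts (descents \<alpha>). 2 \<le> d}"
  have P_sub: "P \<subseteq> {2..<n}"
    using descents_subset[OF comp] by (auto simp: P_def run_starts_def)
  have parity_sum: "(\<Sum>m=0..(n - c) div 2. f (2 * m + c)) = (-1) ^ c * (if P = {} then 1 else 0)"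
    if "c \<le> 1" for c
  proof -
    define h where "h = (n - c) div 2"
    have "(\<Sum>m=0..h. f (2 * m + c)) = (-1) ^ c * (\<Sum>m=0..h. Chat (card {d\<in>P. d < 2 * m + c}) m
                                      * Chat (card {d\<in>P. 2 * m + c + 2 \<le> d}) (h - m))"
      unfolding sum_distrib_left f_def h_def P_def
      by (intro sum.cong refl lm_rm_term_eq_Chat[OF comp \<open>c \<le> 1\<close>]) simp
    moreover have "n - c \<le> 2 * h + 1"
      unfolding h_def by linarith
    then have "\<forall>d\<in>P. c < d \<and> d \<le> 2 * h + c"
      using \<open>c \<le> 1\<close> by (auto dest!: subsetD[OF P_sub])
    moreover have "\<forall>d\<in>P. Suc d \<notin> P"
      using run_starts_sparse by (auto simp: P_def)
    ultimately show ?thesis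
      using sparse_block_sum[of P c h] by (simp add: h_def)
  qed
  have "(\<Sum>i=0..n. f i) = 0"
    using sum_atLeast0_atMost_even_odd[OF \<open>0 < n\<close>, of f] parity_sum[of 0] parity_sum[of 1] by simp
  then show ?thesis
    by (simp add: f_def)
qed

theorem proposition6p1:
  fixes n :: nat and \<alpha> :: "nat list"
  assumes "0 < n" and "is_comp n \<alpha>"
  shows "((\<Sum>j=0..n div 2. (-1::real) ^ (lp \<alpha> (2*j) + rm \<alpha> (2*j))
            * Cnum (lp \<alpha> (2*j)) (j - lp \<alpha> (2*j))
            * Cnum (rm \<alpha> (2*j)) (n div 2 - j - rm \<alpha> (2*j)))
         = (if \<alpha> = [n] then 4 ^ (n div 2) else 0)) \<and>
         ((\<Sum>i=0..n. (-1::real) ^ (lm \<alpha> i + rm \<alpha> i + i) / 4 ^ (i div 2 + (n - i) div 2)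
            * Cnum (lm \<alpha> i) (i div 2 - lm \<alpha> i)
            * Cnum (rm \<alpha> i) ((n - i) div 2 - rm \<alpha> i)) = 0)"
  using lp_rm_sum_eq[OF assms] lm_rm_sum_eq_0[OF assms] by blast

end
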